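(* Let $a_2,a_3$ be integers with $1<a_2<a_3$, $A=\{1,a_2,a_3\}$, and write $a_3=C_2a_2+C_1$ with $0\le C_1<a_2$. If $a_2\ge 2C_1\ge a_2-2C_2+1$, then the fundamental stride generator for $A$ is of order $0$ or $1$.
   Context: For integers $n$ and $i\ge 0$, an integer $x$ has an $n$-generation of order $i$ if there are integers $c_1,c_2\ge 0$ with $x+ia_3=c_2a_2+c_1$ and $c_1+c_2\le n+i$. For integers $n$ and $p\ge0$, $SG(A,n,p)$ is a stride generator (of order $p$) if: (A) every integer $0\le x<a_3$ has an $n$-generation of some order $\le p$; (B) at least one integer $0\le x<a_3$ has no $n$-generation of order $<p$; (C) at least one integer $0\le y<a_3$ has no $(n-1)$-generation of any order $\le p+1$. A stride generator $SG(A,n,p)$ is the fundamental stride generator for $A$ if there is no stride generator $SG(A,n',p')$ with $n'>n$. *)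

theory Defs
  imports Main
begin

definition has_gen :: "int \<Rightarrow> int \<Rightarrow> int \<Rightarrow> int \<Rightarrow> nat \<Rightarrow> bool" where
  "has_gen a2 a3 n x i \<longleftrightarrow>
     (\<exists>c1 c2 :: int. c1 \<ge> 0 \<and> c2 \<ge> 0 \<and> x + int i * a3 = c2 * a2 + c1 \<and> c1 + c2 \<le> n + int i)"

definition stride_generator :: "int \<Rightarrow> int \<Rightarrow> int \<Rightarrow> nat \<Rightarrow> bool" where
  "stride_generator a2 a3 n p \<longleftrightarrow>
     (\<forall>x. 0 \<le> x \<and> x < a3 \<longrightarrow> (\<exists>i\<le>p. has_gen a2 a3 n x i)) \<and>
     (\<exists>x. 0 \<le> x \<and> x < a3 \<and> \<not> (\<exists>i<p. has_gen a2 a3 n x i)) \<and>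
     (\<exists>y. 0 \<le> y \<and> y < a3 \<and> \<not> (\<exists>i\<le>p + 1. has_gen a2 a3 (n - 1) y i))"

definition fundamental_sg :: "int \<Rightarrow> int \<Rightarrow> int \<Rightarrow> nat \<Rightarrow> bool" where
  "fundamental_sg a2 a3 n p \<longleftrightarrow>
     stride_generator a2 a3 n p \<and> \<not> (\<exists>n' p'. n' > n \<and> stride_generator a2 a3 n' p')"

end

theory Submission
  imports Defs
begin

text \<open>Every stride generator \<open>SG(A,n',q)\<close> bounds the order of the fundamental one: if \<open>q < p\<close>,
  condition (A) for \<open>n'\<close> and the residue witnessing (B) for \<open>n\<close> force \<open>n < n'\<close>. So it suffices to
  exhibit one stride generator of order at most 1. Take
  \<open>K = max (C2 + a2 - C1 - 2) (min (C2 + a2 - 2) (2 C2 + C1 - 2))\<close>. Since a generation exists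
  exactly when the greedy base-\<open>a2\<close> digits of \<open>x + i a3\<close> are cheap enough, every residue has a
  \<open>K\<close>-generation of order at most 1, while \<open>C2 a2 - 1\<close> or \<open>C2 a2 - C1 - 1\<close> has no
  \<open>(K - 1)\<close>-generation of order at most 2; the least order covering all residues is then a
  stride generator.\<close>

definition gen_covers :: "int \<Rightarrow> int \<Rightarrow> int \<Rightarrow> nat \<Rightarrow> bool" where
  "gen_covers a2 a3 n p \<longleftrightarrow> (\<forall>x. 0 \<le> x \<and> x < a3 \<longrightarrow> (\<exists>i\<le>p. has_gen a2 a3 n x i))"

lemma has_gen_mono:
  assumes "has_gen a2 a3 n x i" "n \<le> n'"
  shows "has_gen a2 a3 n' x i"
  using assms unfolding has_gen_def by force

lemma gen_covers_mono:
  assumes "gen_covers a2 a3 n p" "n \<le> n'" "p \<le> p'"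
  shows "gen_covers a2 a3 n' p'"
  using assms has_gen_mono unfolding gen_covers_def by (meson order_trans)

text \<open>The greedy representation of \<open>x + i a3\<close> in base \<open>a2\<close> (as many \<open>a2\<close>'s as possible)
  minimises the number of summands, so it alone decides whether a generation exists.\<close>

lemma has_gen_iff_greedy:
  fixes a2 a3 n x q r :: int
  assumes "0 < a2" "0 \<le> r" "r < a2" "0 \<le> q" and x: "x + int i * a3 = q * a2 + r"
  shows "has_gen a2 a3 n x i \<longleftrightarrow> q + r \<le> n + int i"
proof
  assume "has_gen a2 a3 n x i"
  then obtain c1 c2 where c: "0 \<le> c1" "0 \<le> c2" "x + int i * a3 = c2 * a2 + c1" "c1 + c2 \<le> n + int i"
    unfolding has_gen_def by blast
  have c1: "c1 = (q - c2) * a2 + r"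
    using c(3) x by (simp add: algebra_simps)
  then have "0 < (q - c2 + 1) * a2"
    using c(1) \<open>r < a2\<close> by (simp add: algebra_simps)
  then have "0 \<le> q - c2"
    using \<open>0 < a2\<close> by (simp add: zero_less_mult_iff)
  then have "q - c2 \<le> (q - c2) * a2"
    using \<open>0 < a2\<close> by (simp add: mult_le_cancel_left1)
  then show "q + r \<le> n + int i"
    using c1 c(4) by linarith
next
  assume "q + r \<le> n + int i"
  then show "has_gen a2 a3 n x i"
    unfolding has_gen_def using assms by (intro exI[of _ r] exI[of _ q]) simp
qed

lemma stride_generator_imp_gen_covers:
  "stride_generator a2 a3 n p \<Longrightarrow> gen_covers a2 a3 n p"
  unfolding stride_generator_def gen_covers_def by blast

lemma stride_generator_exists:
  assumes "0 < a3" "gen_covers a2 a3 n m" "\<not> gen_covers a2 a3 (n - 1) (m + 1)"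
  shows "\<exists>p\<le>m. stride_generator a2 a3 n p"
proof -
  define p where "p = (LEAST p. gen_covers a2 a3 n p)"
  have covers: "gen_covers a2 a3 n p"
    unfolding p_def using assms(2) by (rule LeastI)
  have "p \<le> m"
    unfolding p_def using assms(2) by (rule Least_le)
  have minimal: "\<exists>x. 0 \<le> x \<and> x < a3 \<and> \<not> (\<exists>i<p. has_gen a2 a3 n x i)"
  proof (cases p)
    case 0
    then show ?thesis using assms(1) by auto
  next
    case (Suc k)
    then have "\<not> gen_covers a2 a3 n k"
      using not_less_Least[of k "gen_covers a2 a3 n"] unfolding p_def by simp
    then show ?thesis
      unfolding gen_covers_def using Suc by (auto simp: less_Suc_eq_le)
  qed
  have "\<not> gen_covers a2 a3 (n - 1) (p + 1)"
    using assms(3) gen_covers_mono \<open>p \<le> m\<close> by fastforce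
  then have "stride_generator a2 a3 n p"
    using covers minimal unfolding stride_generator_def gen_covers_def by blast
  then show ?thesis using \<open>p \<le> m\<close> by blast
qed

lemma fundamental_sg_order_le:
  assumes "fundamental_sg a2 a3 n p" "stride_generator a2 a3 K q"
  shows "p \<le> q"
proof (rule ccontr)
  assume "\<not> p \<le> q"
  obtain x where x: "0 \<le> x" "x < a3" "\<not> (\<exists>i<p. has_gen a2 a3 n x i)"
    using assms(1) unfolding fundamental_sg_def stride_generator_def by blast
  obtain i where "i \<le> q" "has_gen a2 a3 K x i"
    using stride_generator_imp_gen_covers[OF assms(2)] x unfolding gen_covers_def by blast
  then have "n < K"
    using x(3) \<open>\<not> p \<le> q\<close> has_gen_mono[of a2 a3 K x i n] by force
  then show False
    using assms unfolding fundamental_sg_def by blast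
qed

lemma gen_covers_order_1:
  fixes a2 a3 C1 C2 K :: int
  assumes a2: "0 < a2" and a3: "a3 = C2 * a2 + C1"
    and "0 \<le> C1" "C1 < a2" "2 * C1 \<le> a2" "1 \<le> C2"
    and K: "C2 + a2 - C1 - 2 \<le> K" "min (C2 + a2 - 2) (2 * C2 + C1 - 2) \<le> K"
  shows "gen_covers a2 a3 K 1"
  unfolding gen_covers_def
proof (intro allI impI)
  fix x assume x: "0 \<le> x \<and> x < a3"
  define q where "q = x div a2"
  define r where "r = x mod a2"
  have xqr: "x = q * a2 + r" and r: "0 \<le> r" "r < a2" and "0 \<le> q"
    using x a2 by (auto simp: q_def r_def pos_imp_zdiv_nonneg_iff)
  have "q * a2 < (C2 + 1) * a2"
    using x xqr r a3 \<open>C1 < a2\<close> by (simp add: algebra_simps)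
  then have "q \<le> C2"
    using a2 by (simp add: mult_less_cancel_right)
  have top_digit: "r < C1" if "q = C2"
    using x xqr a3 that by simp
  have order_0: "has_gen a2 a3 K x 0 \<longleftrightarrow> q + r \<le> K"
    using has_gen_iff_greedy[OF a2 r \<open>0 \<le> q\<close>] xqr by simp
  show "\<exists>i\<le>1. has_gen a2 a3 K x i"
  proof (cases "r + C1 < a2")
    case True
    then have "q + r \<le> K"
      using \<open>q \<le> C2\<close> top_digit K assms(3-6) by (cases "q = C2") auto
    then show ?thesis using order_0 by auto
  next
    case False
    \<comment> \<open>adding \<open>a3\<close> carries into the \<open>a2\<close>-digit\<close>
    have order_1: "has_gen a2 a3 K x 1 \<longleftrightarrow> (q + C2 + 1) + (r + C1 - a2) \<le> K + 1"
      using has_gen_iff_greedy[of a2 "r + C1 - a2" "q + C2 + 1" x 1 a3 K] False r a3 xqr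
        \<open>0 \<le> q\<close> \<open>1 \<le> C2\<close> \<open>C1 < a2\<close> by (simp add: algebra_simps)
    have "q + 1 \<le> C2"
      using False top_digit \<open>q \<le> C2\<close> \<open>2 * C1 \<le> a2\<close> r by fastforce
    then have "q + r \<le> K \<or> (q + C2 + 1) + (r + C1 - a2) \<le> K + 1"
      using K r by linarith
    then show ?thesis using order_0 order_1 by force
  qed
qed

lemma not_gen_covers_order_2_of_le_min:
  fixes a2 a3 C1 C2 K :: int
  assumes "0 < a2" and a3: "a3 = C2 * a2 + C1"
    and "0 \<le> C1" "2 * C1 \<le> a2" "1 \<le> C2"
    and "K \<le> C2 + a2 - 2" "K \<le> 2 * C2 + C1 - 2"
  shows "\<not> gen_covers a2 a3 (K - 1) 2"
proof -
  define y where "y = C2 * a2 - 1"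
  have "a2 \<le> C2 * a2"
    using assms by (simp add: mult_le_cancel_right1)
  then have "0 \<le> y" "y < a3"
    using assms unfolding y_def by linarith+
  moreover have "\<not> has_gen a2 a3 (K - 1) y i" if "i \<le> 2" for i
  proof -
    consider "i = 0" | "i \<noteq> 0" "C1 = 0" | "i \<noteq> 0" "C1 \<noteq> 0"
      by blast
    then show ?thesis
    proof cases
      case 1
      have "y + int i * a3 = (C2 - 1) * a2 + (a2 - 1)"
        using 1 by (simp add: y_def algebra_simps)
      then show ?thesis
        using has_gen_iff_greedy[of a2 "a2 - 1" "C2 - 1" y i a3 "K - 1"] 1 assms by simp
    next
      case 2
      have "y + int i * a3 = ((int i + 1) * C2 - 1) * a2 + (a2 - 1)"
        using 2 a3 by (simp add: y_def algebra_simps)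
      moreover have "int i \<le> int i * C2"
        using \<open>1 \<le> C2\<close> by (simp add: mult_le_cancel_left1)
      ultimately show ?thesis
        using has_gen_iff_greedy[of a2 "a2 - 1" "(int i + 1) * C2 - 1" y i a3 "K - 1"] assms
        by (simp add: algebra_simps)
    next
      case 3
      have "y + int i * a3 = ((int i + 1) * C2) * a2 + (int i * C1 - 1)"
        using a3 by (simp add: y_def algebra_simps)
      moreover have "int i * C1 \<le> 2 * C1" "1 \<le> int i * C1" "C2 + C1 + int i \<le> int i * C2 + int i * C1 + 1"
        using 3 that assms by (auto simp: le_Suc_eq numeral_2_eq_2)
      ultimately show ?thesis
        using has_gen_iff_greedy[of a2 "int i * C1 - 1" "(int i + 1) * C2" y i a3 "K - 1"] assms
        by (simp add: algebra_simps)
    qed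
  qed
  ultimately show ?thesis
    unfolding gen_covers_def by blast
qed

lemma not_gen_covers_order_2_of_le_diff:
  fixes a2 a3 C1 C2 K :: int
  assumes "0 < a2" and a3: "a3 = C2 * a2 + C1"
    and "0 \<le> C1" "C1 < a2" "1 \<le> C2" "a2 - 2 * C2 + 1 \<le> 2 * C1"
    and "K \<le> C2 + a2 - C1 - 2"
  shows "\<not> gen_covers a2 a3 (K - 1) 2"
proof -
  define y where "y = C2 * a2 - C1 - 1"
  have "a2 \<le> C2 * a2"
    using assms by (simp add: mult_le_cancel_right1)
  then have "0 \<le> y" "y < a3"
    using assms unfolding y_def by linarith+
  moreover have "\<not> has_gen a2 a3 (K - 1) y i" if "i \<le> 2" for i
  proof -
    consider "i = 0" | "i = 1" | "i = 2" "C1 = 0" | "i = 2" "C1 \<noteq> 0"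
      using \<open>i \<le> 2\<close> by linarith
    then show ?thesis
    proof cases
      case 1
      have "y + int i * a3 = (C2 - 1) * a2 + (a2 - C1 - 1)"
        using 1 by (simp add: y_def algebra_simps)
      then show ?thesis
        using has_gen_iff_greedy[of a2 "a2 - C1 - 1" "C2 - 1" y i a3 "K - 1"] 1 assms by simp
    next
      case 2
      have "y + int i * a3 = (2 * C2 - 1) * a2 + (a2 - 1)"
        using 2 a3 by (simp add: y_def algebra_simps)
      then show ?thesis
        using has_gen_iff_greedy[of a2 "a2 - 1" "2 * C2 - 1" y i a3 "K - 1"] 2 assms by simp
    next
      case 3
      have "y + int i * a3 = (3 * C2 - 1) * a2 + (a2 - 1)"
        using 3 a3 by (simp add: y_def algebra_simps)
      then show ?thesis
        using has_gen_iff_greedy[of a2 "a2 - 1" "3 * C2 - 1" y i a3 "K - 1"] 3 assms by simp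
    next
      case 4
      \<comment> \<open>the only place where the lower bound on \<open>2 C1\<close> is needed\<close>
      have "y + int i * a3 = (3 * C2) * a2 + (C1 - 1)"
        using 4 a3 by (simp add: y_def algebra_simps)
      then show ?thesis
        using has_gen_iff_greedy[of a2 "C1 - 1" "3 * C2" y i a3 "K - 1"] 4 assms by simp
    qed
  qed
  ultimately show ?thesis
    unfolding gen_covers_def by blast
qed

theorem lemma16:
  fixes a2 a3 C1 C2 n :: int and p :: nat
  assumes "1 < a2" and "a2 < a3"
    and "a3 = C2 * a2 + C1" and "0 \<le> C1" and "C1 < a2"
    and "a2 \<ge> 2 * C1" and "2 * C1 \<ge> a2 - 2 * C2 + 1"
    and "fundamental_sg a2 a3 n p"
  shows "p = 0 \<or> p = 1"
proof -
  have "1 \<le> C2"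
  proof (rule ccontr)
    assume "\<not> 1 \<le> C2"
    then have "C2 * a2 \<le> 0"
      using assms(1) by (simp add: mult_nonpos_nonneg)
    then show False using assms by linarith
  qed
  define K where "K = max (C2 + a2 - C1 - 2) (min (C2 + a2 - 2) (2 * C2 + C1 - 2))"
  have "gen_covers a2 a3 K 1"
    using assms \<open>1 \<le> C2\<close> by (intro gen_covers_order_1[of a2 a3 C2 C1]) (auto simp: K_def)
  moreover have "\<not> gen_covers a2 a3 (K - 1) 2"
  proof (cases "C2 + a2 - C1 - 2 \<le> min (C2 + a2 - 2) (2 * C2 + C1 - 2)")
    case True
    then show ?thesis
      using assms \<open>1 \<le> C2\<close> by (intro not_gen_covers_order_2_of_le_min) (auto simp: K_def)
  next
    case False
    then show ?thesis
      using assms \<open>1 \<le> C2\<close> by (intro not_gen_covers_order_2_of_le_diff) (auto simp: K_def)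
  qed
  ultimately obtain q where "q \<le> 1" "stride_generator a2 a3 K q"
    using stride_generator_exists[of a3 a2 K 1] assms(1,2) by (auto simp: numeral_2_eq_2)
  then have "p \<le> 1"
    using fundamental_sg_order_le[OF assms(8)] by fastforce
  then show ?thesis by auto
qed

end
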